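(* Let $\varepsilon\in(0,\frac12)$ and $d\ge1$, and let $G$ be a graph with $|G|\ge \varepsilon^{-10d^2}$. Let $x:=\varepsilon^{5d}$. Assume that for every induced subgraph $F$ of $G$ with $|F|\ge \varepsilon^{d}|G|$, there exists $k\in[2,1/x]$ such that there is a pure or $x$-sparse $(k,|F|/k^d)$-blockade in $F$. Then there is an $(\varepsilon^{-1},{x^{2d}|G|})$-blockade $(B_1,\ldots,B_{\ell})$ in $G$, such that for all distinct $i,j\in[\ell]$, $(B_i,B_j)$ is either complete or weakly $\varepsilon^d$-sparse in $G$.
   Context: Graphs are finite and simple; $|G|$ is the number of vertices of $G$. A blockade in $G$ is a sequence $(B_1,\ldots,B_m)$ of disjoint subsets of $V(G)$, with length $m$ and width $\min_i|B_i|$; a $(k,w)$-blockade has length at least $k$ and width at least $w$. A pair $(A,B)$ of disjoint sets is complete if all edges between them are present, anticomplete if none are; a blockade is pure if every pair of its blocks is complete or anticomplete. For disjoint $A,B$, $B$ is $x$-sparse to $A$ if every vertex of $B$ has at most $x|A|$ neighbours in $A$; a blockade $(B_1,\ldots,B_m)$ is $x$-sparse if $B_j$ is $x$-sparse to $B_i$ for all $i<j$. $(A,B)$ is weakly $x$-sparse if the number of edges between $A$ and $B$ is at most $x|A||B|$. *)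

theory Defs
  imports Complex_Main
begin

text \<open>Induced subgraphs are given by vertex subsets S of V
  (with the edges of E between vertices of S).\<close>
definition simple_graph :: "'a set \<Rightarrow> ('a \<Rightarrow> 'a \<Rightarrow> bool) \<Rightarrow> bool" where
  "simple_graph V E \<longleftrightarrow> finite V \<and> (\<forall>u v. E u v \<longrightarrow> u \<in> V \<and> v \<in> V)
     \<and> (\<forall>u v. E u v \<longrightarrow> E v u) \<and> (\<forall>v. \<not> E v v)"

definition blockade :: "'a set \<Rightarrow> (nat \<Rightarrow> 'a set) \<Rightarrow> nat \<Rightarrow> bool" where
  "blockade S B m \<longleftrightarrow> (\<forall>i<m. B i \<subseteq> S) \<and> (\<forall>i<m. \<forall>j<m. i \<noteq> j \<longrightarrow> B i \<inter> B j = {})"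

definition has_width_at_least :: "(nat \<Rightarrow> 'a set) \<Rightarrow> nat \<Rightarrow> real \<Rightarrow> bool" where
  "has_width_at_least B m w \<longleftrightarrow> (\<forall>i<m. real (card (B i)) \<ge> w)"

definition complete_pair :: "('a \<Rightarrow> 'a \<Rightarrow> bool) \<Rightarrow> 'a set \<Rightarrow> 'a set \<Rightarrow> bool" where
  "complete_pair E A B \<longleftrightarrow> (\<forall>a\<in>A. \<forall>b\<in>B. E a b)"

definition anticomplete_pair :: "('a \<Rightarrow> 'a \<Rightarrow> bool) \<Rightarrow> 'a set \<Rightarrow> 'a set \<Rightarrow> bool" where
  "anticomplete_pair E A B \<longleftrightarrow> (\<forall>a\<in>A. \<forall>b\<in>B. \<not> E a b)"

definition pure_blockade :: "('a \<Rightarrow> 'a \<Rightarrow> bool) \<Rightarrow> (nat \<Rightarrow> 'a set) \<Rightarrow> nat \<Rightarrow> bool" where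
  "pure_blockade E B m \<longleftrightarrow>
     (\<forall>i<m. \<forall>j<m. i \<noteq> j \<longrightarrow> complete_pair E (B i) (B j) \<or> anticomplete_pair E (B i) (B j))"

definition sparse_to :: "('a \<Rightarrow> 'a \<Rightarrow> bool) \<Rightarrow> real \<Rightarrow> 'a set \<Rightarrow> 'a set \<Rightarrow> bool" where
  "sparse_to E x A B \<longleftrightarrow> (\<forall>v\<in>B. real (card {u\<in>A. E v u}) \<le> x * real (card A))"

definition sparse_blockade :: "('a \<Rightarrow> 'a \<Rightarrow> bool) \<Rightarrow> real \<Rightarrow> (nat \<Rightarrow> 'a set) \<Rightarrow> nat \<Rightarrow> bool" where
  "sparse_blockade E x B m \<longleftrightarrow> (\<forall>i j. i < j \<and> j < m \<longrightarrow> sparse_to E x (B i) (B j))"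

definition weakly_sparse :: "('a \<Rightarrow> 'a \<Rightarrow> bool) \<Rightarrow> real \<Rightarrow> 'a set \<Rightarrow> 'a set \<Rightarrow> bool" where
  "weakly_sparse E x A B \<longleftrightarrow>
     real (card {(a, b). a \<in> A \<and> b \<in> B \<and> E a b}) \<le> x * real (card A) * real (card B)"

end

(*
  Write x = \<epsilon>^(5d).  If some induced subgraph on at least \<epsilon>^d |G| vertices has a pure or
  x-sparse blockade of length k \<ge> 1/\<epsilon>, its first k blocks already work: each has at least
  x^d \<epsilon>^d |G| vertices, pure pairs are complete or anticomplete, and x-sparse pairs are
  weakly \<epsilon>^d-sparse.

  Otherwise the hypothesis only produces lengths k < 1/\<epsilon>, and we refine recursively: to find
  N pieces in a set F with |F| \<ge> (\<epsilon>N)^d |G|, split F by a blockade of length k and find N/k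
  pieces in each block, stopping once N \<le> 1.  The pieces found in F have at least (\<epsilon>/N)^d |F|
  vertices, and in particular an \<epsilon>^(2d) fraction of the block containing them.  So two pieces
  from different blocks inherit completeness or anticompleteness from a pure blockade, and
  x-sparsity of the blocks makes them weakly \<epsilon>^d-sparse because x \<le> \<epsilon>^(3d).  Starting from
  F = G and N = 1/\<epsilon> yields 1/\<epsilon> pieces of size \<epsilon>^(2d) |G|.
*)

theory Submission
  imports Defs
begin

definition complete_or_weakly_sparse :: "('a \<Rightarrow> 'a \<Rightarrow> bool) \<Rightarrow> real \<Rightarrow> 'a set \<Rightarrow> 'a set \<Rightarrow> bool" where
  "complete_or_weakly_sparse E y A B \<longleftrightarrow> complete_pair E A B \<or> weakly_sparse E y A B"

definition has_pure_or_sparse_blockade ::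
    "('a \<Rightarrow> 'a \<Rightarrow> bool) \<Rightarrow> real \<Rightarrow> real \<Rightarrow> 'a set \<Rightarrow> nat \<Rightarrow> bool" where
  "has_pure_or_sparse_blockade E x d S k \<longleftrightarrow>
     (\<exists>B m. k \<le> m \<and> blockade S B m \<and> has_width_at_least B m (real (card S) / (real k powr d))
        \<and> (pure_blockade E B m \<or> sparse_blockade E x B m))"

(* A blockade without an order on its blocks, so that packings of different blocks can be
   merged by taking their union. *)
definition complete_or_sparse_packing ::
    "('a \<Rightarrow> 'a \<Rightarrow> bool) \<Rightarrow> real \<Rightarrow> 'a set \<Rightarrow> real \<Rightarrow> 'a set set \<Rightarrow> bool" where
  "complete_or_sparse_packing E y F w CC \<longleftrightarrow> finite CC \<and> pairwise disjnt CC
     \<and> (\<forall>C\<in>CC. C \<subseteq> F \<and> C \<noteq> {} \<and> w \<le> card C) \<and> pairwise (complete_or_weakly_sparse E y) CC"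

lemma has_pure_or_sparse_blockadeE:
  assumes "has_pure_or_sparse_blockade E x d S k"
  obtains B where "blockade S B k" "has_width_at_least B k (real (card S) / real k powr d)"
    and "pure_blockade E B k \<or> sparse_blockade E x B k"
proof -
  from assms obtain B m where "k \<le> m" "blockade S B m"
    "has_width_at_least B m (real (card S) / real k powr d)"
    "pure_blockade E B m \<or> sparse_blockade E x B m"
    unfolding has_pure_or_sparse_blockade_def by blast
  then show thesis
    using that unfolding blockade_def has_width_at_least_def pure_blockade_def sparse_blockade_def
    by (smt (verit) order_less_le_trans)
qed

lemma has_width_at_least_mono:
  "has_width_at_least B m w \<Longrightarrow> w' \<le> w \<Longrightarrow> has_width_at_least B m w'"
  unfolding has_width_at_least_def by force

lemma blockade_mono: "blockade S B k \<Longrightarrow> S \<subseteq> V \<Longrightarrow> blockade V B k"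
  unfolding blockade_def by blast

lemma blockade_card_less:
  assumes "blockade F B k" "finite F" "2 \<le> k" "\<And>i. i < k \<Longrightarrow> B i \<noteq> {}" "i < k"
  shows "card (B i) < card F"
proof -
  define j where "j = (if i = 0 then 1 else 0 :: nat)"
  have j: "j < k" "j \<noteq> i" using \<open>2 \<le> k\<close> unfolding j_def by auto
  obtain v where "v \<in> B j" using assms(4)[OF j(1)] by blast
  moreover have "B i \<subseteq> F" "B j \<subseteq> F" "B i \<inter> B j = {}"
    using assms(1,5) j by (auto simp: blockade_def)
  ultimately have "B i \<subset> F" by blast
  with \<open>finite F\<close> show ?thesis by (rule psubset_card_mono)
qed

lemma card_edges_between:
  assumes "finite A" "finite B"
  shows "card {(a, b). a \<in> A \<and> b \<in> B \<and> E a b} = (\<Sum>a\<in>A. card {b\<in>B. E a b})"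
proof -
  have "{(a, b). a \<in> A \<and> b \<in> B \<and> E a b} = Sigma A (\<lambda>a. {b\<in>B. E a b})" by auto
  then show ?thesis using assms by simp
qed

lemma weakly_sparse_commute:
  assumes "\<And>u v. E u v \<Longrightarrow> E v u"
  shows "weakly_sparse E y A B \<longleftrightarrow> weakly_sparse E y B A"
proof -
  have "{(a, b). a \<in> B \<and> b \<in> A \<and> E a b} = prod.swap ` {(a, b). a \<in> A \<and> b \<in> B \<and> E a b}"
    using assms by (auto intro!: image_eqI)
  then have "card {(a, b). a \<in> B \<and> b \<in> A \<and> E a b} = card {(a, b). a \<in> A \<and> b \<in> B \<and> E a b}"
    by (simp add: card_image)
  then show ?thesis unfolding weakly_sparse_def by (simp add: mult_ac)
qed

lemma weakly_sparse_if_anticomplete: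
  assumes "anticomplete_pair E A B" "0 \<le> y"
  shows "weakly_sparse E y A B"
proof -
  have "{(a, b). a \<in> A \<and> b \<in> B \<and> E a b} = {}"
    using assms(1) unfolding anticomplete_pair_def by auto
  with assms(2) show ?thesis unfolding weakly_sparse_def by (simp only: card.empty) simp
qed

lemma weakly_sparse_if_sparse_to:
  fixes x y :: real
  assumes sparse: "sparse_to E x A B" and "finite A" "finite D" "C \<subseteq> A" "D \<subseteq> B"
    and xy: "x * card A \<le> y * card C"
  shows "weakly_sparse E y D C"
proof -
  have "card {u\<in>C. E v u} \<le> y * card C" if "v \<in> D" for v
  proof -
    have "card {u\<in>C. E v u} \<le> card {u\<in>A. E v u}"
      using \<open>finite A\<close> \<open>C \<subseteq> A\<close> by (intro card_mono) auto
    moreover have "card {u\<in>A. E v u} \<le> x * card A"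
      using sparse that \<open>D \<subseteq> B\<close> unfolding sparse_to_def by auto
    ultimately show ?thesis using xy by linarith
  qed
  then have "(\<Sum>v\<in>D. real (card {u\<in>C. E v u})) \<le> (\<Sum>v\<in>D. y * card C)"
    by (rule sum_mono)
  moreover have "finite C" using \<open>finite A\<close> \<open>C \<subseteq> A\<close> finite_subset by auto
  ultimately show ?thesis
    unfolding weakly_sparse_def using \<open>finite D\<close> by (simp add: card_edges_between mult_ac)
qed

lemma complete_pair_mono:
  "complete_pair E A B \<Longrightarrow> C \<subseteq> A \<Longrightarrow> D \<subseteq> B \<Longrightarrow> complete_pair E C D"
  unfolding complete_pair_def by blast

lemma anticomplete_pair_mono:
  "anticomplete_pair E A B \<Longrightarrow> C \<subseteq> A \<Longrightarrow> D \<subseteq> B \<Longrightarrow> anticomplete_pair E C D"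
  unfolding anticomplete_pair_def by blast

lemma complete_or_weakly_sparse_subblocks:
  fixes x y :: real
  assumes E_sym: "\<And>u v. E u v \<Longrightarrow> E v u" and fin: "finite (B i)" "finite (B j)"
    and B: "pure_blockade E B m \<or> sparse_blockade E x B m" and ij: "i < m" "j < m" "i \<noteq> j"
    and C: "C \<subseteq> B i" "x * card (B i) \<le> y * card C"
    and D: "D \<subseteq> B j" "x * card (B j) \<le> y * card D"
    and "0 \<le> y"
  shows "complete_or_weakly_sparse E y C D"
proof (cases "pure_blockade E B m")
  case True
  with ij have "complete_pair E (B i) (B j) \<or> anticomplete_pair E (B i) (B j)"
    unfolding pure_blockade_def by auto
  then show ?thesis unfolding complete_or_weakly_sparse_def
    using complete_pair_mono anticomplete_pair_mono weakly_sparse_if_anticomplete C D \<open>0 \<le> y\<close>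
    by metis
next
  case False
  with B have sparse: "sparse_blockade E x B m" by simp
  have "finite C" "finite D" using fin C D finite_subset by auto
  consider "i < j" | "j < i" using ij by linarith
  then have "weakly_sparse E y C D"
  proof cases
    case 1
    with sparse ij have "sparse_to E x (B i) (B j)" unfolding sparse_blockade_def by auto
    then have "weakly_sparse E y D C"
      using weakly_sparse_if_sparse_to[OF _ fin(1) \<open>finite D\<close> C(1) D(1) C(2)] by blast
    then show ?thesis using weakly_sparse_commute[of E y D C] E_sym by blast
  next
    case 2
    with sparse ij have "sparse_to E x (B j) (B i)" unfolding sparse_blockade_def by auto
    with weakly_sparse_if_sparse_to[OF _ fin(2) \<open>finite C\<close> D(1) C(1) D(2)] show ?thesis .
  qed
  then show ?thesis unfolding complete_or_weakly_sparse_def ..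
qed

lemma complete_or_sparse_packing_singleton:
  fixes w :: real
  shows "F \<noteq> {} \<Longrightarrow> w \<le> card F \<Longrightarrow> complete_or_sparse_packing E y F w {F}"
  unfolding complete_or_sparse_packing_def by simp

lemma complete_or_sparse_packing_mono_width:
  "complete_or_sparse_packing E y F w CC \<Longrightarrow> w' \<le> w \<Longrightarrow> complete_or_sparse_packing E y F w' CC"
  unfolding complete_or_sparse_packing_def by force

lemma complete_or_sparse_packing_UN:
  assumes packing: "\<And>i. i < k \<Longrightarrow> complete_or_sparse_packing E y (B i) w (f i)"
    and B: "blockade F B k"
    and across: "\<And>i j C D. i < k \<Longrightarrow> j < k \<Longrightarrow> i \<noteq> j \<Longrightarrow> C \<in> f i \<Longrightarrow> D \<in> f j \<Longrightarrow>
      complete_or_weakly_sparse E y C D"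
  shows "complete_or_sparse_packing E y F w (\<Union>i<k. f i)"
    and "card (\<Union>i<k. f i) = (\<Sum>i<k. card (f i))"
proof -
  have member: "C \<subseteq> B i" "C \<noteq> {}" "w \<le> card C" if "i < k" "C \<in> f i" for i C
    using packing[OF that(1)] that(2) unfolding complete_or_sparse_packing_def by auto
  have apart: "disjnt C D" if "i < k" "j < k" "i \<noteq> j" "C \<in> f i" "D \<in> f j" for i j C D
  proof -
    have "B i \<inter> B j = {}" using B that(1-3) by (simp add: blockade_def)
    with member(1)[OF that(1,4)] member(1)[OF that(2,5)] show ?thesis
      unfolding disjnt_def by blast
  qed
  have "disjnt C D \<and> complete_or_weakly_sparse E y C D"
    if "i < k" "j < k" "C \<in> f i" "D \<in> f j" "C \<noteq> D" for i j C D
  proof (cases "i = j")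
    case True
    have "pairwise disjnt (f i)" "pairwise (complete_or_weakly_sparse E y) (f i)"
      using packing[OF that(1)] by (simp_all add: complete_or_sparse_packing_def)
    with True that(3-5) show ?thesis unfolding pairwise_def by simp
  next
    case False
    with apart across that show ?thesis by blast
  qed
  then have "pairwise disjnt (\<Union>i<k. f i)" "pairwise (complete_or_weakly_sparse E y) (\<Union>i<k. f i)"
    unfolding pairwise_def by blast+
  moreover have "\<forall>i<k. finite (f i)"
    using packing by (simp add: complete_or_sparse_packing_def)
  moreover have "\<forall>C\<in>(\<Union>i<k. f i). C \<subseteq> F \<and> C \<noteq> {} \<and> w \<le> card C"
  proof
    fix C assume "C \<in> (\<Union>i<k. f i)"
    then obtain i where "i < k" "C \<in> f i" by blast
    moreover have "B i \<subseteq> F" using B \<open>i < k\<close> by (simp add: blockade_def)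
    ultimately show "C \<subseteq> F \<and> C \<noteq> {} \<and> w \<le> card C" using member by blast
  qed
  ultimately show "complete_or_sparse_packing E y F w (\<Union>i<k. f i)"
    unfolding complete_or_sparse_packing_def by blast
  have "f i \<inter> f j = {}" if "i < k" "j < k" "i \<noteq> j" for i j
    using apart[OF that] member(2)[OF that(1)] by (fastforce simp: disjnt_def)
  with \<open>\<forall>i<k. finite (f i)\<close> show "card (\<Union>i<k. f i) = (\<Sum>i<k. card (f i))"
    by (intro card_UN_disjoint) auto
qed

lemma complete_or_sparse_packing_UN_blockade:
  fixes x y r w :: real
  assumes E_sym: "\<And>u v. E u v \<Longrightarrow> E v u" and "finite F"
    and B: "blockade F B k" and kind: "pure_blockade E B k \<or> sparse_blockade E x B k"
    and packing: "\<And>i. i < k \<Longrightarrow> complete_or_sparse_packing E y (B i) (r * card (B i)) (f i)"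
    and width: "\<And>i. i < k \<Longrightarrow> w \<le> r * card (B i)"
    and "x \<le> y * r" "0 \<le> y"
  shows "complete_or_sparse_packing E y F w (\<Union>i<k. f i)"
    and "card (\<Union>i<k. f i) = (\<Sum>i<k. card (f i))"
proof -
  have fin: "finite (B i)" if "i < k" for i
  proof -
    have "B i \<subseteq> F" using B that by (simp add: blockade_def)
    with \<open>finite F\<close> show ?thesis by (rule finite_subset[rotated])
  qed
  have member: "C \<subseteq> B i" "x * card (B i) \<le> y * card C" if "i < k" "C \<in> f i" for i C
  proof -
    have "C \<subseteq> B i" "r * card (B i) \<le> card C"
      using packing[OF that(1)] that(2) unfolding complete_or_sparse_packing_def by auto
    moreover have "x * card (B i) \<le> y * r * card (B i)"
      using \<open>x \<le> y * r\<close> by (simp add: mult_right_mono)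
    ultimately show "C \<subseteq> B i" "x * card (B i) \<le> y * card C"
      using \<open>0 \<le> y\<close> by (auto simp: mult.assoc intro: order_trans mult_left_mono)
  qed
  have across: "complete_or_weakly_sparse E y C D"
    if "i < k" "j < k" "i \<noteq> j" "C \<in> f i" "D \<in> f j" for i j C D
    using complete_or_weakly_sparse_subblocks[OF E_sym fin[OF that(1)] fin[OF that(2)] kind
        that(1-3) member[OF that(1,4)] member[OF that(2,5)] \<open>0 \<le> y\<close>] .
  have packing_w: "complete_or_sparse_packing E y (B i) w (f i)" if "i < k" for i
    using packing[OF that] width[OF that] by (rule complete_or_sparse_packing_mono_width)
  show "complete_or_sparse_packing E y F w (\<Union>i<k. f i)"
    using packing_w B across by (rule complete_or_sparse_packing_UN)
  show "card (\<Union>i<k. f i) = (\<Sum>i<k. card (f i))"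
    using packing_w B across by (rule complete_or_sparse_packing_UN)
qed

lemma complete_or_sparse_packing_refinement_step:
  fixes e d x M :: real
  assumes E_sym: "\<And>u v. E u v \<Longrightarrow> E v u" and "finite F"
    and B: "blockade F B k" and width: "has_width_at_least B k (card F / k powr d)"
    and kind: "pure_blockade E B k \<or> sparse_blockade E x B k"
    and e: "0 < e" and d: "0 \<le> d" and k: "0 < k" and M: "0 < M" "M \<le> 1 / e"
    and x: "x \<le> e powr (3 * d)"
    and sub: "\<And>i. i < k \<Longrightarrow>
      complete_or_sparse_packing E (e powr d) (B i) ((e / M) powr d * card (B i)) (f i) \<and> M \<le> card (f i)"
  shows "complete_or_sparse_packing E (e powr d) F ((e / (k * M)) powr d * card F) (\<Union>i<k. f i)"
    and "k * M \<le> card (\<Union>i<k. f i)"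
proof -
  have "(e / (k * M)) powr d * card F = (e / M) powr d * (card F / k powr d)"
    using k by (simp add: powr_divide powr_mult)
  then have w: "(e / (k * M)) powr d * card F \<le> (e / M) powr d * card (B i)" if "i < k" for i
    using width that unfolding has_width_at_least_def
    by (simp add: mult_left_mono times_divide_eq_right[symmetric] del: times_divide_eq_right)
  have "e * e \<le> e / M" using M e by (simp add: field_simps)
  then have "(e * e) powr d \<le> (e / M) powr d" using e d by (intro powr_mono2) auto
  have "x \<le> e powr d * (e * e) powr d" using x e by (simp add: powr_mult flip: powr_add)
  also have "\<dots> \<le> e powr d * (e / M) powr d"
    using \<open>(e * e) powr d \<le> (e / M) powr d\<close> by (simp add: mult_left_mono)
  finally have x_le: "x \<le> e powr d * (e / M) powr d" .
  have packing: "\<And>i. i < k \<Longrightarrow>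
      complete_or_sparse_packing E (e powr d) (B i) ((e / M) powr d * card (B i)) (f i)"
    using sub by blast
  note refined = complete_or_sparse_packing_UN_blockade[OF E_sym \<open>finite F\<close> B kind packing w x_le]
  then show "complete_or_sparse_packing E (e powr d) F ((e / (k * M)) powr d * card F) (\<Union>i<k. f i)"
    by simp
  have "k * M = (\<Sum>i<k. M)" by simp
  also have "\<dots> \<le> (\<Sum>i<k. real (card (f i)))" using sub by (intro sum_mono) blast
  also have "\<dots> = card (\<Union>i<k. f i)" using refined(2) by simp
  finally show "k * M \<le> card (\<Union>i<k. f i)" .
qed

lemma blockade_of_complete_or_sparse_packing:
  assumes "complete_or_sparse_packing E y V w CC"
  obtains B where "blockade V B (card CC)" "has_width_at_least B (card CC) w"
    and "\<forall>i<card CC. \<forall>j<card CC. i \<noteq> j \<longrightarrow> complete_or_weakly_sparse E y (B i) (B j)"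
proof -
  have CC: "finite CC" "pairwise disjnt CC" "\<And>C. C \<in> CC \<Longrightarrow> C \<subseteq> V \<and> w \<le> card C"
    "pairwise (complete_or_weakly_sparse E y) CC"
    using assms unfolding complete_or_sparse_packing_def by auto
  then obtain B where B: "bij_betw B {0..<card CC} CC" using ex_bij_betw_nat_finite by blast
  then have member: "B i \<in> CC" if "i < card CC" for i
    using that unfolding bij_betw_def by auto
  have distinct: "B i \<noteq> B j" if "i < card CC" "j < card CC" "i \<noteq> j" for i j
    using B that unfolding bij_betw_def inj_on_def by auto
  show thesis
  proof
    show "blockade V B (card CC)"
      unfolding blockade_def
      using CC(2,3) member distinct by (simp add: pairwise_def disjnt_def)
    show "has_width_at_least B (card CC) w"
      unfolding has_width_at_least_def using CC(3) member by simp
    show "\<forall>i<card CC. \<forall>j<card CC. i \<noteq> j \<longrightarrow> complete_or_weakly_sparse E y (B i) (B j)"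
      using CC(4) member distinct by (simp add: pairwise_def)
  qed
qed

lemma blockade_for_refinementE:
  fixes e d x N :: real
  assumes e: "0 < e" and d: "0 \<le> d"
    and short: "\<And>S. S \<subseteq> V \<Longrightarrow> e powr d * card V \<le> card S \<Longrightarrow>
      \<exists>k::nat. 2 \<le> k \<and> k < 1 / e \<and> has_pure_or_sparse_blockade E x d S k"
    and F: "F \<subseteq> V" "0 < card F" "(e * N) powr d * card V \<le> card F"
    and N: "1 < N" "N \<le> 1 / e"
  obtains k B where "blockade F B k" "has_width_at_least B k (card F / k powr d)"
    and "pure_blockade E B k \<or> sparse_blockade E x B k"
    and "0 < k" "e < N / k" "N / k \<le> 1 / e"
    and "\<And>i. i < k \<Longrightarrow> card (B i) < card F \<and> (e * (N / k)) powr d * card V \<le> card (B i)"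
proof -
  have "e powr d \<le> (e * N) powr d" using e N d by (intro powr_mono2) auto
  with F(3) have "e powr d * card V \<le> card F"
    by (meson mult_right_mono of_nat_0_le_iff order_trans)
  then obtain k :: nat where k: "2 \<le> k" "k < 1 / e" and "has_pure_or_sparse_blockade E x d F k"
    using short F(1) by blast
  from this(3) obtain B where B: "blockade F B k"
    and width: "has_width_at_least B k (card F / k powr d)"
    and kind: "pure_blockade E B k \<or> sparse_blockade E x B k"
    by (rule has_pure_or_sparse_blockadeE)
  have "0 < k" using k by simp
  have "k * e < N" using k e N by (simp add: field_simps)
  then have "e < N / k" using \<open>0 < k\<close> by (simp add: field_simps)
  have "N / k \<le> N" using N k by (simp add: field_simps)
  with N have "N / k \<le> 1 / e" by linarith
  have block: "card F / k powr d \<le> card (B i)" if "i < k" for i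
    using width that unfolding has_width_at_least_def by auto
  have "0 < card F / k powr d" using F(2) \<open>0 < k\<close> by simp
  with block have "B i \<noteq> {}" if "i < k" for i using that by fastforce
  then have "card (B i) < card F" if "i < k" for i
    using blockade_card_less[OF B _ k(1)] F(2) that card_gt_0_iff by blast
  moreover have "(e * (N / k)) powr d * card V \<le> card (B i)" if "i < k" for i
  proof -
    have "(e * (N / k)) powr d * card V = (e * N) powr d * card V / k powr d"
      by (simp add: powr_divide powr_mult)
    also have "\<dots> \<le> card F / k powr d" using F(3) by (simp add: divide_right_mono)
    finally show ?thesis using block[OF that] by linarith
  qed
  ultimately show thesis
    using that[OF B width kind \<open>0 < k\<close> \<open>e < N / k\<close> \<open>N / k \<le> 1 / e\<close>] by blast
qed

lemma exists_complete_or_sparse_packing: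
  fixes e d x N :: real
  assumes graph: "simple_graph V E" and e: "0 < e" and d: "0 \<le> d" and x: "x \<le> e powr (3 * d)"
    and "V \<noteq> {}"
    and short: "\<And>S. S \<subseteq> V \<Longrightarrow> e powr d * card V \<le> card S \<Longrightarrow>
      \<exists>k::nat. 2 \<le> k \<and> k < 1 / e \<and> has_pure_or_sparse_blockade E x d S k"
    and "F \<subseteq> V" "e < N" "N \<le> 1 / e" "(e * N) powr d * card V \<le> card F"
  shows "\<exists>CC. complete_or_sparse_packing E (e powr d) F ((e / N) powr d * card F) CC \<and> N \<le> card CC"
  using assms(7-10)
proof (induction "card F" arbitrary: F N rule: less_induct)
  case less
  have "finite V" and E_sym: "\<And>u v. E u v \<Longrightarrow> E v u"
    using graph unfolding simple_graph_def by auto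
  then have "finite F" using less.prems(1) finite_subset by blast
  have "0 < (e * N) powr d * card V"
    using e less.prems(2) \<open>V \<noteq> {}\<close> \<open>finite V\<close> by (simp add: card_gt_0_iff)
  with less.prems(4) have "0 < card F" by linarith
  show ?case
  proof (cases "N \<le> 1")
    case True
    have "(e / N) powr d \<le> 1" using e less.prems(2) d by (intro powr_le1) auto
    then have "(e / N) powr d * card F \<le> card F" by (simp add: mult_left_le_one_le)
    with \<open>0 < card F\<close> True show ?thesis
      by (intro exI[of _ "{F}"] conjI complete_or_sparse_packing_singleton) auto
  next
    case False
    obtain k B where B: "blockade F B k" "has_width_at_least B k (card F / k powr d)"
      and kind: "pure_blockade E B k \<or> sparse_blockade E x B k"
      and k: "0 < k" "e < N / k" "N / k \<le> 1 / e"
      and blocks: "\<And>i. i < k \<Longrightarrow> card (B i) < card F \<and> (e * (N / k)) powr d * card V \<le> card (B i)"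
      using blockade_for_refinementE[OF e d short less.prems(1) \<open>0 < card F\<close> less.prems(4)]
        False less.prems(3) by (metis not_le)
    have "B i \<subseteq> V" if "i < k" for i
      using B(1) less.prems(1) that unfolding blockade_def by blast
    then have "\<forall>i<k. \<exists>CC. complete_or_sparse_packing E (e powr d) (B i)
        ((e / (N / k)) powr d * card (B i)) CC \<and> N / k \<le> card CC"
      using less.hyps k(2,3) blocks by blast
    then obtain f where "\<And>i. i < k \<Longrightarrow> complete_or_sparse_packing E (e powr d) (B i)
        ((e / (N / k)) powr d * card (B i)) (f i) \<and> N / k \<le> card (f i)"
      by metis
    from complete_or_sparse_packing_refinement_step[OF E_sym \<open>finite F\<close> B kind e d _ _ k(3) x this]
    show ?thesis using k e by fastforce
  qed
qed

lemma complete_or_weakly_sparse_blockade_of_pure_or_sparse: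
  fixes x y d :: real
  assumes graph: "simple_graph V E" and "S \<subseteq> V" and blockade: "has_pure_or_sparse_blockade E x d S k"
    and x: "0 < x" "k \<le> 1 / x" "x \<le> y" and d: "0 \<le> d"
  obtains B where "blockade V B k" "has_width_at_least B k (x powr d * card S)"
    and "\<forall>i<k. \<forall>j<k. i \<noteq> j \<longrightarrow> complete_or_weakly_sparse E y (B i) (B j)"
proof -
  obtain B where B: "blockade S B k" and width: "has_width_at_least B k (card S / k powr d)"
    and kind: "pure_blockade E B k \<or> sparse_blockade E x B k"
    using blockade by (rule has_pure_or_sparse_blockadeE)
  have "finite V" and E_sym: "\<And>u v. E u v \<Longrightarrow> E v u"
    using graph unfolding simple_graph_def by auto
  have fin: "finite (B i)" if "i < k" for i
  proof -
    have "B i \<subseteq> V" using B \<open>S \<subseteq> V\<close> that unfolding blockade_def by blast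
    with \<open>finite V\<close> show ?thesis by (rule finite_subset[rotated])
  qed
  have shrink: "x powr d * card S \<le> card S / k powr d" if "0 < k"
  proof -
    have "k powr d \<le> (1 / x) powr d" using x that d by (intro powr_mono2) auto
    then have "x powr d * k powr d \<le> 1" using x by (simp add: powr_divide field_simps)
    then show ?thesis using that by (simp add: field_simps mult_left_le)
  qed
  show thesis
  proof
    show "blockade V B k" using B \<open>S \<subseteq> V\<close> by (rule blockade_mono)
    show "has_width_at_least B k (x powr d * card S)"
      unfolding has_width_at_least_def
    proof (intro allI impI)
      fix i assume "i < k"
      then have "x powr d * card S \<le> card S / k powr d" using shrink by simp
      with width \<open>i < k\<close> show "x powr d * card S \<le> card (B i)"
        unfolding has_width_at_least_def by force
    qed
    have le: "x * card (B i) \<le> y * card (B i)" for i using x by (simp add: mult_right_mono)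
    show "\<forall>i<k. \<forall>j<k. i \<noteq> j \<longrightarrow> complete_or_weakly_sparse E y (B i) (B j)"
      using complete_or_weakly_sparse_subblocks[OF E_sym fin fin kind _ _ _ order_refl le
          order_refl le] x by auto
  qed
qed

lemma complete_or_weakly_sparse_blockade_of_short_blockades:
  fixes e d x :: real
  assumes graph: "simple_graph V E" and e: "0 < e" "e < 1" and d: "0 \<le> d"
    and x: "x \<le> e powr (3 * d)" and "V \<noteq> {}"
    and short: "\<And>S. S \<subseteq> V \<Longrightarrow> e powr d * card V \<le> card S \<Longrightarrow>
      \<exists>k::nat. 2 \<le> k \<and> k < 1 / e \<and> has_pure_or_sparse_blockade E x d S k"
  obtains B m where "1 / e \<le> real m" "blockade V B m" "has_width_at_least B m (e powr (2 * d) * card V)"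
    and "\<forall>i<m. \<forall>j<m. i \<noteq> j \<longrightarrow> complete_or_weakly_sparse E (e powr d) (B i) (B j)"
proof -
  have "e * e < 1" using e mult_strict_mono[of e 1 e 1] by simp
  then have "e < 1 / e" using e by (simp add: field_simps)
  moreover have "(e * (1 / e)) powr d * card V \<le> card V" using e by simp
  ultimately obtain CC
    where CC: "complete_or_sparse_packing E (e powr d) V ((e / (1 / e)) powr d * card V) CC"
      "1 / e \<le> card CC"
    using exists_complete_or_sparse_packing[OF graph e(1) d x \<open>V \<noteq> {}\<close> short subset_refl]
    by blast
  have "(e / (1 / e)) powr d = e powr (2 * d)" using e by (simp add: powr_mult flip: powr_add)
  with CC(1) obtain B where "blockade V B (card CC)"
    "has_width_at_least B (card CC) (e powr (2 * d) * card V)"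
    "\<forall>i<card CC. \<forall>j<card CC. i \<noteq> j \<longrightarrow> complete_or_weakly_sparse E (e powr d) (B i) (B j)"
    by (auto elim: blockade_of_complete_or_sparse_packing)
  with CC(2) show thesis by (rule that)
qed

lemma powr_five_times_bounds:
  fixes e d :: real
  assumes e: "0 < e" "e < 1" and d: "1 \<le> d"
  shows "e powr (5 * d) \<le> e powr d" and "e powr (5 * d) \<le> e powr (3 * d)"
    and "(e powr (5 * d)) powr (2 * d) \<le> (e powr (5 * d)) powr d * e powr d"
    and "(e powr (5 * d)) powr (2 * d) \<le> e powr (2 * d)"
proof -
  show "e powr (5 * d) \<le> e powr d" using e d by (intro powr_mono') auto
  show "e powr (5 * d) \<le> e powr (3 * d)" using e d by (intro powr_mono') auto
  have "e powr (5 * d) \<le> e powr 1" using e d by (intro powr_mono') auto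
  have "(e powr (5 * d)) powr (2 * d) = (e powr (5 * d)) powr d * (e powr (5 * d)) powr d"
    by (simp only: mult_2 powr_add)
  also have "\<dots> \<le> (e powr (5 * d)) powr d * e powr d"
    using \<open>e powr (5 * d) \<le> e powr 1\<close> e d by (intro mult_left_mono powr_mono2) auto
  finally show "(e powr (5 * d)) powr (2 * d) \<le> (e powr (5 * d)) powr d * e powr d" .
  have "d * 1 \<le> d * d" using d by (intro mult_left_mono) auto
  then have "2 * d \<le> 5 * d * (2 * d)" using d by simp
  then show "(e powr (5 * d)) powr (2 * d) \<le> e powr (2 * d)"
    using e by (simp add: powr_powr powr_mono')
qed

theorem theorem6p1:
  fixes V :: "'a set" and E :: "'a \<Rightarrow> 'a \<Rightarrow> bool" and \<epsilon> d :: real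
  assumes "simple_graph V E"
    and "0 < \<epsilon>" and "\<epsilon> < 1/2" and "d \<ge> 1"
    and "real (card V) \<ge> \<epsilon> powr (- 10 * d\<^sup>2)"
    and "\<forall>S. S \<subseteq> V \<and> real (card S) \<ge> \<epsilon> powr d * real (card V) \<longrightarrow>
           (\<exists>k::nat. 2 \<le> k \<and> real k \<le> 1 / (\<epsilon> powr (5 * d)) \<and>
              (\<exists>B m. k \<le> m \<and> blockade S B m
                 \<and> has_width_at_least B m (real (card S) / (real k powr d))
                 \<and> (pure_blockade E B m \<or> sparse_blockade E (\<epsilon> powr (5 * d)) B m)))"
  shows "\<exists>B m. real m \<ge> 1 / \<epsilon> \<and> blockade V B m
           \<and> has_width_at_least B m ((\<epsilon> powr (5 * d)) powr (2 * d) * real (card V))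
           \<and> (\<forall>i<m. \<forall>j<m. i \<noteq> j \<longrightarrow>
                complete_pair E (B i) (B j) \<or> weakly_sparse E (\<epsilon> powr d) (B i) (B j))"
proof -
  define x where "x = \<epsilon> powr (5 * d)"
  have "\<epsilon> < 1" "0 \<le> d" using assms(3,4) by auto
  have "0 < x" "x \<le> \<epsilon> powr d" "x \<le> \<epsilon> powr (3 * d)"
    and width: "x powr (2 * d) \<le> x powr d * \<epsilon> powr d" "x powr (2 * d) \<le> \<epsilon> powr (2 * d)"
    using powr_five_times_bounds[OF assms(2) \<open>\<epsilon> < 1\<close> assms(4)] assms(2) unfolding x_def by auto
  (* the lower bound on |G| is only needed to make G nonempty *)
  have "0 < \<epsilon> powr (- 10 * d\<^sup>2)" using assms(2) by simp
  with assms(5) have "V \<noteq> {}" by auto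
  show ?thesis
  proof (cases "\<exists>S k. S \<subseteq> V \<and> \<epsilon> powr d * card V \<le> card S \<and> 1 / \<epsilon> \<le> real k
      \<and> real k \<le> 1 / x \<and> has_pure_or_sparse_blockade E x d S k")
    case True
    then obtain S k where S: "S \<subseteq> V" "\<epsilon> powr d * card V \<le> card S"
      and k: "1 / \<epsilon> \<le> real k" "real k \<le> 1 / x" and blockade: "has_pure_or_sparse_blockade E x d S k"
      by blast
    from blockade obtain B where "blockade V B k" and B: "has_width_at_least B k (x powr d * card S)"
      and "\<forall>i<k. \<forall>j<k. i \<noteq> j \<longrightarrow> complete_or_weakly_sparse E (\<epsilon> powr d) (B i) (B j)"
      by (rule complete_or_weakly_sparse_blockade_of_pure_or_sparse[OF assms(1) S(1) _ \<open>0 < x\<close>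
          k(2) \<open>x \<le> \<epsilon> powr d\<close> \<open>0 \<le> d\<close>])
    moreover have "x powr (2 * d) * card V \<le> x powr d * (\<epsilon> powr d * card V)"
      using width(1) by (simp add: mult_right_mono flip: mult.assoc)
    with S(2) have "x powr (2 * d) * card V \<le> x powr d * card S"
      by (smt (verit) mult_left_mono powr_ge_zero)
    ultimately show ?thesis
      using k(1) has_width_at_least_mono[OF B] unfolding complete_or_weakly_sparse_def x_def by blast
  next
    case False
    have short: "\<exists>k::nat. 2 \<le> k \<and> k < 1 / \<epsilon> \<and> has_pure_or_sparse_blockade E x d S k"
      if S: "S \<subseteq> V" "\<epsilon> powr d * card V \<le> card S" for S
      using assms(6)[rule_format, OF conjI[OF S]] False S
      unfolding has_pure_or_sparse_blockade_def x_def by (metis not_le)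
    obtain B m where "1 / \<epsilon> \<le> real m" "blockade V B m"
      and B: "has_width_at_least B m (\<epsilon> powr (2 * d) * card V)"
      and "\<forall>i<m. \<forall>j<m. i \<noteq> j \<longrightarrow> complete_or_weakly_sparse E (\<epsilon> powr d) (B i) (B j)"
      by (rule complete_or_weakly_sparse_blockade_of_short_blockades[OF assms(1,2) \<open>\<epsilon> < 1\<close>
          \<open>0 \<le> d\<close> \<open>x \<le> \<epsilon> powr (3 * d)\<close> \<open>V \<noteq> {}\<close> short])
    moreover have "x powr (2 * d) * card V \<le> \<epsilon> powr (2 * d) * card V"
      using width(2) by (simp add: mult_right_mono)
    ultimately show ?thesis
      using has_width_at_least_mono[OF B] unfolding complete_or_weakly_sparse_def x_def by blast
  qed
qed

end
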